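(* Let $G_{P,\mathcal{K}'}$ be the closure under R1–R4 of a pattern $P$ with consistent background knowledge $\mathcal{K}'$. Suppose $a_m - b$ is undirected in $G_{P,\mathcal{K}'}$ for $m=1,\dots,M$, and some consistent DAG extension of $G_{P,\mathcal{K}'}$ contains $a_m\to b$ for all $m\le M$. Orient $a_m\to b$ for all $m\le M$ and then close the orientations under R1–R4. Then for every edge $a'\to b'$ oriented during this closure, $b'$ is a descendant of $b$ in the resulting PDAG.
   Context: A PDAG is a graph with directed and undirected edges and no directed cycle. The pattern of a DAG is the graph with the same skeleton in which an edge is directed iff it belongs to a v-structure (a triple $a\to c\leftarrow b$ with $a,b$ non-adjacent). A consistent DAG extension of a PDAG $G$ is a DAG with the same skeleton, the same orientation of every directed edge of $G$, and no v-structures other than those of $G$. A set $\mathcal{K}$ of orientations of undirected edges of $P$ is consistent background knowledge if some DAG with pattern $P$ contains all of them. $G_{P,\mathcal{K}}$ is obtained from $P$ by orienting the edges in $\mathcal{K}$ and then repeatedly applying until none applies: R1: if $k\to i$, $i - j$, $k,j$ non-adjacent, orient $i\to j$; R2: if $i\to k\to j$ and $i - j$, orient $i\to j$; R3: if $i - k$, $i - l$, $i - j$, $k\to j$, $l\to j$, $k,l$ non-adjacent, orient $i\to j$; R4: if $i - k$, $i - l$, $i - j$, $k\to l\to j$, $k,j$ non-adjacent, orient $i\to j$. Descendants are taken along directed edges; every node is a descendant of itself. *)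

theory Defs
  imports Main
begin

text \<open>A (partially directed) graph on the finite vertex type 'a is encoded as a relation
  G :: ('a \<times> 'a) set: an undirected edge x - y is represented by both (x,y) and (y,x)
  being in G, a directed edge x \<rightarrow> y by (x,y) in G and (y,x) not in G.\<close>

type_synonym 'a graph = "('a \<times> 'a) set"

definition adj :: "'a graph \<Rightarrow> 'a \<Rightarrow> 'a \<Rightarrow> bool" where
  "adj G x y \<longleftrightarrow> (x, y) \<in> G \<or> (y, x) \<in> G"

definition nonadj :: "'a graph \<Rightarrow> 'a \<Rightarrow> 'a \<Rightarrow> bool" where
  "nonadj G x y \<longleftrightarrow> x \<noteq> y \<and> \<not> adj G x y"

definition dir :: "'a graph \<Rightarrow> 'a \<Rightarrow> 'a \<Rightarrow> bool" where
  "dir G x y \<longleftrightarrow> (x, y) \<in> G \<and> (y, x) \<notin> G"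

definition und :: "'a graph \<Rightarrow> 'a \<Rightarrow> 'a \<Rightarrow> bool" where
  "und G x y \<longleftrightarrow> (x, y) \<in> G \<and> (y, x) \<in> G"

definition dir_edges :: "'a graph \<Rightarrow> 'a graph" where
  "dir_edges G = {(x, y). dir G x y}"

definition descendant :: "'a graph \<Rightarrow> 'a \<Rightarrow> 'a \<Rightarrow> bool" where
  "descendant G x y \<longleftrightarrow> (x, y) \<in> (dir_edges G)\<^sup>*"

text \<open>A DAG: a relation without directed cycles (in particular irreflexive and with no
  pair of opposite edges, so every edge is directed).\<close>
definition is_dag :: "'a graph \<Rightarrow> bool" where
  "is_dag D \<longleftrightarrow> acyclic D"

definition vstructs :: "'a graph \<Rightarrow> ('a \<times> 'a \<times> 'a) set" where
  "vstructs G = {(x, z, y). dir G x z \<and> dir G y z \<and> nonadj G x y}"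

definition in_vstruct :: "'a graph \<Rightarrow> 'a \<Rightarrow> 'a \<Rightarrow> bool" where
  "in_vstruct G x z \<longleftrightarrow> (\<exists>y. (x, z, y) \<in> vstructs G \<or> (y, z, x) \<in> vstructs G)"

text \<open>Pattern of a DAG: same skeleton, edge directed iff it belongs to a v-structure.\<close>
definition pattern :: "'a graph \<Rightarrow> 'a graph" where
  "pattern D = D \<union> {(y, x). (x, y) \<in> D \<and> \<not> in_vstruct D x y}"

definition is_pattern :: "'a graph \<Rightarrow> bool" where
  "is_pattern P \<longleftrightarrow> (\<exists>D. is_dag D \<and> P = pattern D)"

definition consistent_ext :: "'a graph \<Rightarrow> 'a graph \<Rightarrow> bool" where
  "consistent_ext G D \<longleftrightarrow> is_dag D \<and> (\<forall>x y. adj D x y \<longleftrightarrow> adj G x y)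
     \<and> (\<forall>x y. dir G x y \<longrightarrow> (x, y) \<in> D) \<and> vstructs D \<subseteq> vstructs G"

text \<open>Consistent background knowledge: a set of orientations (x,y) (meaning x \<rightarrow> y) of
  undirected edges of P, all contained in some DAG whose pattern is P.\<close>
definition consistent_bk :: "'a graph \<Rightarrow> 'a graph \<Rightarrow> bool" where
  "consistent_bk P K \<longleftrightarrow> (\<forall>(x, y) \<in> K. und P x y)
     \<and> (\<exists>D. is_dag D \<and> pattern D = P \<and> K \<subseteq> D)"

definition orient :: "'a graph \<Rightarrow> 'a graph \<Rightarrow> 'a graph" where
  "orient G K = G - {(y, x). (x, y) \<in> K}"

definition R1 :: "'a graph \<Rightarrow> 'a \<Rightarrow> 'a \<Rightarrow> bool" where
  "R1 G i j \<longleftrightarrow> (\<exists>k. dir G k i \<and> und G i j \<and> nonadj G k j)"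

definition R2 :: "'a graph \<Rightarrow> 'a \<Rightarrow> 'a \<Rightarrow> bool" where
  "R2 G i j \<longleftrightarrow> (\<exists>k. dir G i k \<and> dir G k j \<and> und G i j)"

definition R3 :: "'a graph \<Rightarrow> 'a \<Rightarrow> 'a \<Rightarrow> bool" where
  "R3 G i j \<longleftrightarrow> (\<exists>k l. und G i k \<and> und G i l \<and> und G i j \<and> dir G k j \<and> dir G l j
                      \<and> nonadj G k l)"

definition R4 :: "'a graph \<Rightarrow> 'a \<Rightarrow> 'a \<Rightarrow> bool" where
  "R4 G i j \<longleftrightarrow> (\<exists>k l. und G i k \<and> und G i l \<and> und G i j \<and> dir G k l \<and> dir G l j
                      \<and> nonadj G k j)"

definition meek_step :: "'a graph \<Rightarrow> 'a graph \<Rightarrow> bool" where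
  "meek_step G G' \<longleftrightarrow> (\<exists>i j. (R1 G i j \<or> R2 G i j \<or> R3 G i j \<or> R4 G i j)
                              \<and> G' = G - {(j, i)})"

definition meek_closure :: "'a graph \<Rightarrow> 'a graph \<Rightarrow> bool" where
  "meek_closure G G' \<longleftrightarrow> meek_step\<^sup>*\<^sup>* G G' \<and> \<not> (\<exists>G''. meek_step G' G'')"

end

theory Submission
  imports Defs
begin

text \<open>Since \<open>G\<^sub>1\<close> is closed under R1--R4, a rule can fire during the second closure only
  because one of the edges it inspects has been directed after \<open>G\<^sub>1\<close>. Inductively, every such
  edge points into a descendant of \<open>b\<close>, and the premises of each rule then place \<open>i\<close> or \<open>j\<close>
  below \<open>b\<close>; the new edge \<open>i \<rightarrow> j\<close> keeps \<open>j\<close> below \<open>b\<close>.\<close>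

definition refines :: "'a graph \<Rightarrow> 'a graph \<Rightarrow> bool" where
  "refines G H \<longleftrightarrow> G \<subseteq> H \<and> nonadj G = nonadj H"

definition new_heads_below :: "'a \<Rightarrow> 'a graph \<Rightarrow> 'a graph \<Rightarrow> bool" where
  "new_heads_below b H G \<longleftrightarrow> (\<forall>x y. dir G x y \<and> \<not> dir H x y \<longrightarrow> descendant G b y)"

lemma und_refines: "refines G H \<Longrightarrow> und G x y \<Longrightarrow> und H x y"
  by (auto simp: refines_def und_def)

lemma nonadj_refines: "refines G H \<Longrightarrow> nonadj G x y \<Longrightarrow> nonadj H x y"
  by (simp add: refines_def)

lemma dir_remove_reverse: "und G i j \<Longrightarrow> dir G x y \<Longrightarrow> dir (G - {(j, i)}) x y"
  by (auto simp: dir_def und_def)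

lemma descendant_remove_reverse:
  assumes "und G i j" and "descendant G u v"
  shows "descendant (G - {(j, i)}) u v"
proof -
  have "dir_edges G \<subseteq> dir_edges (G - {(j, i)})"
    using dir_remove_reverse[OF assms(1)] by (auto simp: dir_edges_def)
  then show ?thesis
    using assms(2) rtrancl_mono unfolding descendant_def by blast
qed

lemma descendant_dir_trans: "descendant G u v \<Longrightarrow> dir G v w \<Longrightarrow> descendant G u w"
  unfolding descendant_def dir_edges_def by (auto intro: rtrancl_into_rtrancl)

lemma descendant_dir: "dir G v w \<Longrightarrow> descendant G v w"
  using descendant_dir_trans[of G v v w] by (simp add: descendant_def)

lemma meek_rule_uses_new_edge:
  assumes ref: "refines G H"
    and fires: "R1 G i j \<or> R2 G i j \<or> R3 G i j \<or> R4 G i j"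
    and not_H: "\<not> (R1 H i j \<or> R2 H i j \<or> R3 H i j \<or> R4 H i j)"
  shows "\<exists>x y. dir G x y \<and> \<not> dir H x y \<and> (descendant G y i \<or> descendant G y j)"
  using fires
proof (elim disjE)
  assume "R1 G i j"
  then obtain k where "dir G k i" "und G i j" "nonadj G k j"
    unfolding R1_def by blast
  with not_H show ?thesis
    unfolding R1_def descendant_def
    by (meson ref und_refines nonadj_refines rtrancl.rtrancl_refl)
next
  assume "R2 G i j"
  then obtain k where "dir G i k" "dir G k j" "und G i j"
    unfolding R2_def by blast
  with not_H show ?thesis
    unfolding R2_def
    by (meson ref und_refines descendant_dir rtrancl.rtrancl_refl descendant_def)
next
  assume "R3 G i j"
  then obtain k l where "und G i k" "und G i l" "und G i j" "dir G k j" "dir G l j"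
      "nonadj G k l"
    unfolding R3_def by blast
  with not_H show ?thesis
    unfolding R3_def descendant_def
    by (meson ref und_refines nonadj_refines rtrancl.rtrancl_refl)
next
  assume "R4 G i j"
  then obtain k l where "und G i k" "und G i l" "und G i j" "dir G k l" "dir G l j"
      "nonadj G k j"
    unfolding R4_def by blast
  with not_H show ?thesis
    unfolding R4_def
    by (meson ref und_refines nonadj_refines descendant_dir rtrancl.rtrancl_refl descendant_def)
qed

lemma meek_stepE:
  assumes "meek_step G G'"
  obtains i j where "R1 G i j \<or> R2 G i j \<or> R3 G i j \<or> R4 G i j" and "und G i j"
    and "G' = G - {(j, i)}"
  using assms unfolding meek_step_def R1_def R2_def R3_def R4_def by blast

lemma refines_meek_step: "meek_step G G' \<Longrightarrow> refines G H \<Longrightarrow> refines G' H"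
  by (erule meek_stepE) (auto simp: refines_def nonadj_def adj_def und_def fun_eq_iff)

lemma new_heads_below_meek_step:
  assumes closed: "\<nexists>H'. meek_step H H'"
    and ref: "refines G H" and below: "new_heads_below b H G"
    and step: "meek_step G G'"
  shows "new_heads_below b H G'"
proof -
  obtain i j where fires: "R1 G i j \<or> R2 G i j \<or> R3 G i j \<or> R4 G i j"
    and ij: "und G i j" and G': "G' = G - {(j, i)}"
    using step by (rule meek_stepE)
  have "\<not> (R1 H i j \<or> R2 H i j \<or> R3 H i j \<or> R4 H i j)"
    using closed unfolding meek_step_def by blast
  then obtain x y where "dir G x y" "\<not> dir H x y" "descendant G y i \<or> descendant G y j"
    using meek_rule_uses_new_edge[OF ref fires] by blast
  with below have "descendant G b i \<or> descendant G b j"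
    unfolding new_heads_below_def descendant_def by (meson rtrancl_trans)
  then have "descendant G' b i \<or> descendant G' b j"
    using descendant_remove_reverse[OF ij] G' by blast
  then have b_j: "i \<noteq> j \<Longrightarrow> descendant G' b j"
    using ij G' descendant_dir_trans[of G' b i j] by (auto simp: dir_def und_def)
  show ?thesis
    unfolding new_heads_below_def
  proof (intro allI impI)
    fix x y assume new: "dir G' x y \<and> \<not> dir H x y"
    show "descendant G' b y"
    proof (cases "(x, y) = (i, j)")
      case True
      with new G' have "i \<noteq> j" by (auto simp: dir_def)
      with True b_j show ?thesis by simp
    next
      case False
      with new G' have "dir G x y" by (auto simp: dir_def)
      with new below have "descendant G b y" unfolding new_heads_below_def by blast
      with G' show ?thesis using descendant_remove_reverse[OF ij] by blast
    qed
  qed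
qed

lemma meek_steps_preserve:
  assumes "meek_step\<^sup>*\<^sup>* G G'" and "\<nexists>H'. meek_step H H'"
    and "refines G H" and "new_heads_below b H G"
  shows "refines G' H \<and> new_heads_below b H G'"
  using assms(1,3,4)
  by (induction rule: rtranclp_induct)
    (auto intro: refines_meek_step new_heads_below_meek_step[OF assms(2)])

lemma refines_orient:
  assumes "\<And>x y. (x, y) \<in> A \<Longrightarrow> und H x y"
    and "\<And>x y. (x, y) \<in> A \<Longrightarrow> (y, x) \<in> A \<Longrightarrow> x = y"
  shows "refines (orient H A) H"
  using assms by (auto simp: refines_def orient_def nonadj_def adj_def und_def fun_eq_iff)

lemma new_heads_below_orient:
  assumes "\<And>x y. (x, y) \<in> A \<Longrightarrow> y = b"
  shows "new_heads_below b H (orient H A)"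
  using assms by (auto simp: new_heads_below_def orient_def dir_def descendant_def)

theorem mainTheorem16:
  fixes P K G1 G2 :: "('v::finite \<times> 'v) set"
    and a :: "nat \<Rightarrow> 'v" and b :: 'v and M :: nat
  assumes "is_pattern P"
    and "consistent_bk P K"
    and "meek_closure (orient P K) G1"
    and "\<forall>m\<in>{1..M}. und G1 (a m) b"
    and "\<exists>D. consistent_ext G1 D \<and> (\<forall>m\<in>{1..M}. (a m, b) \<in> D)"
    and "meek_closure (orient G1 {(a m, b) | m. m \<in> {1..M}}) G2"
  shows "\<forall>x y. und (orient G1 {(a m, b) | m. m \<in> {1..M}}) x y \<and> dir G2 x y
                \<longrightarrow> descendant G2 b y"
proof -
  let ?A = "{(a m, b) | m. m \<in> {1..M}}"
  have A: "\<And>x y. (x, y) \<in> ?A \<Longrightarrow> und G1 x y \<and> y = b"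
    using assms(4) by blast
  have ref: "refines (orient G1 ?A) G1"
    using A by (intro refines_orient) auto
  have "new_heads_below b G1 G2"
    using meek_steps_preserve[OF _ _ ref new_heads_below_orient] assms(3,6) A
    unfolding meek_closure_def by blast
  moreover have "\<not> dir G1 x y" if "und (orient G1 ?A) x y" for x y
    using und_refines[OF ref that] by (simp add: und_def dir_def)
  ultimately show ?thesis
    unfolding new_heads_below_def by blast
qed

end
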